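(* Let $(X,\mathbb{Z}^k,T)$ be a $\mathbb{Z}^k$-action, let $d$ be a compatible metric on $X$, let $1\le h\le k$, and let $V\subseteq\mathbb{R}^k$ be an $h$-dimensional linear subspace. Then the quantity $$\lim_{\epsilon\to0}\ \liminf_{N\to\infty}\frac{\mathrm{Widim}_\epsilon\big(X,d^T_{B_r(V)\cap[-N,N]^k}\big)}{\mathrm{vol}_h\big(V\cap[-N,N]^k\big)}$$ is the same for every $r>\sqrt{k}/2$.
   Context: A $\mathbb{Z}^k$-action $(X,\mathbb{Z}^k,T)$ is a compact metric space with a continuous action $T\colon\mathbb{Z}^k\times X\to X$, $(n,x)\mapsto T^nx$. An $\epsilon$-embedding of $(X,d)$ is a continuous $f\colon X\to Y$ with $f(x)=f(x')\Rightarrow d(x,x')<\epsilon$. $\mathrm{Widim}_\epsilon(X,d)$ is the minimal topological dimension of a compact metric space $K$ admitting an $\epsilon$-embedding $X\to K$. $d^T_\Omega(x,x')=\max_{n\in\Omega}d(T^nx,T^nx')$ for finite $\Omega\subset\mathbb{Z}^k$. $B_r(V)=\{u\in\mathbb{Z}^k: |u-w|<r\text{ for some }w\in V\}$. $[-N,N]^k$ is the integer cube, or the real cube when intersected with $V$. $\mathrm{vol}_h$ is $h$-dimensional volume in $V$. *)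

theory Defs
  imports "HOL-Analysis.Analysis"
begin

definition covering_dim_le :: "'a topology \<Rightarrow> nat \<Rightarrow> bool" where
  "covering_dim_le U n \<longleftrightarrow>
     (\<forall>\<U>. finite \<U> \<and> (\<forall>A\<in>\<U>. openin U A) \<and> topspace U \<subseteq> \<Union>\<U> \<longrightarrow>
        (\<exists>\<V>. finite \<V> \<and> (\<forall>B\<in>\<V>. openin U B) \<and> topspace U \<subseteq> \<Union>\<V> \<and>
             (\<forall>B\<in>\<V>. \<exists>A\<in>\<U>. B \<subseteq> A) \<and>
             (\<forall>x\<in>topspace U. card {B\<in>\<V>. x \<in> B} \<le> n + 1)))"

definition topdim :: "'a topology \<Rightarrow> enat" where
  "topdim U = (INF n\<in>{n. covering_dim_le U n}. enat n)"

definition eps_embedding ::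
    "real \<Rightarrow> 'a set \<Rightarrow> ('a \<Rightarrow> 'a \<Rightarrow> real) \<Rightarrow> 'b topology \<Rightarrow> ('a \<Rightarrow> 'b) \<Rightarrow> bool" where
  "eps_embedding \<epsilon> X d K f \<longleftrightarrow>
     continuous_map (Metric_space.mtopology X d) K f \<and>
     (\<forall>x\<in>X. \<forall>x'\<in>X. f x = f x' \<longrightarrow> d x x' < \<epsilon>)"

text \<open>Compact metric spaces are represented (up to homeomorphism) as
  compact subsets of \<open>\<nat> \<Rightarrow> \<real>\<close> with the product topology; every compact metrizable
  space embeds into the Hilbert cube, so no generality is lost.\<close>
definition Widim :: "real \<Rightarrow> 'a set \<Rightarrow> ('a \<Rightarrow> 'a \<Rightarrow> real) \<Rightarrow> enat" where
  "Widim \<epsilon> X d =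
     (INF K\<in>{K :: (nat \<Rightarrow> real) set. compact K \<and>
                 (\<exists>f. eps_embedding \<epsilon> X d (top_of_set K) f)}. topdim (top_of_set K))"

definition Zk_action :: "'a set \<Rightarrow> ('a \<Rightarrow> 'a \<Rightarrow> real) \<Rightarrow> (int^'k \<Rightarrow> 'a \<Rightarrow> 'a) \<Rightarrow> bool" where
  "Zk_action X d T \<longleftrightarrow>
     Metric_space X d \<and> compact_space (Metric_space.mtopology X d) \<and>
     (\<forall>n. continuous_map (Metric_space.mtopology X d) (Metric_space.mtopology X d) (T n)) \<and>
     (\<forall>x\<in>X. T 0 x = x) \<and>
     (\<forall>m n. \<forall>x\<in>X. T (m + n) x = T m (T n x))"

definition dyn_metric ::
    "('a \<Rightarrow> 'a \<Rightarrow> real) \<Rightarrow> (int^'k \<Rightarrow> 'a \<Rightarrow> 'a) \<Rightarrow> (int^'k) set \<Rightarrow> 'a \<Rightarrow> 'a \<Rightarrow> real" where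
  "dyn_metric d T \<Omega> x x' = Max ((\<lambda>n. d (T n x) (T n x')) ` \<Omega>)"

definition vec_of_int :: "int^'k \<Rightarrow> real^'k" where
  "vec_of_int u = (\<chi> i. real_of_int (u $ i))"

definition nbhd_lattice :: "real \<Rightarrow> (real^'k) set \<Rightarrow> (int^'k) set" where
  "nbhd_lattice r V = {u. \<exists>w\<in>V. norm (vec_of_int u - w) < r}"

definition int_cube :: "nat \<Rightarrow> (int^'k) set" where
  "int_cube N = {u. \<forall>i. \<bar>u $ i\<bar> \<le> int N}"

definition real_cube :: "nat \<Rightarrow> (real^'k) set" where
  "real_cube N = {x. \<forall>i. \<bar>x $ i\<bar> \<le> real N}"

definition subspace_vol :: "'h::finite itself \<Rightarrow> (real^'k) set \<Rightarrow> (real^'k) set \<Rightarrow> real" where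
  "subspace_vol _ V S =
     (let L = (SOME L :: real^'h \<Rightarrow> real^'k. linear L \<and> (\<forall>y. norm (L y) = norm y) \<and> range L = V)
      in measure lborel (L -` S))"

definition mdim_quantity ::
    "'h::finite itself \<Rightarrow> 'a set \<Rightarrow> ('a \<Rightarrow> 'a \<Rightarrow> real) \<Rightarrow> (int^'k \<Rightarrow> 'a \<Rightarrow> 'a) \<Rightarrow>
     (real^'k) set \<Rightarrow> real \<Rightarrow> real \<Rightarrow> ereal" where
  "mdim_quantity H X d T V r \<epsilon> =
     liminf (\<lambda>N. ereal_of_enat (Widim \<epsilon> X (dyn_metric d T (nbhd_lattice r V \<inter> int_cube N)))
                 / ereal (subspace_vol H V (V \<inter> real_cube N)))"

end

theory Submission
  imports Defs
begin

text \<open>If \<open>r > \<surd>k/2\<close>, rounding a nearby point of \<open>V\<close> to the lattice writes every lattice point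
  within \<open>r'\<close> of \<open>V\<close> as \<open>f + v\<close> with \<open>f\<close> in the fixed cube \<open>[-c,c]\<^sup>k\<close>, \<open>c = \<lceil>r + r'\<rceil>\<close>, and \<open>v\<close> a
  lattice point within \<open>r\<close> of \<open>V\<close>. Uniform continuity of the finitely many maps \<open>T f\<close> then
  turns a \<open>\<delta>\<close>-embedding for the \<open>r\<close>-neighbourhood in \<open>[-N-c,N+c]\<^sup>k\<close> into an
  \<open>\<epsilon>\<close>-embedding for the \<open>r'\<close>-neighbourhood in \<open>[-N,N]\<^sup>k\<close>. As \<open>vol\<^sub>h(V \<inter> [-N,N]\<^sup>k)\<close> is a
  constant times \<open>N\<^sup>h\<close>, the shift by \<open>c\<close> does not change the liminf. The quantity is antitone
  in \<open>\<epsilon>\<close>, so its limit at \<open>0\<close> is its supremum over \<open>\<epsilon>\<close>, and the two resulting inequalities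
  between these suprema give equality.\<close>

lemma Zk_actionD:
  assumes "Zk_action X d T"
  shows "Metric_space X d"
    and "compact_space (Metric_space.mtopology X d)"
    and "continuous_map (Metric_space.mtopology X d) (Metric_space.mtopology X d) (T n)"
    and "x \<in> X \<Longrightarrow> T n x \<in> X"
    and "x \<in> X \<Longrightarrow> T (m + n) x = T m (T n x)"
    and "x \<in> X \<Longrightarrow> T (- n) (T n x) = x"
proof -
  show ms: "Metric_space X d" and "compact_space (Metric_space.mtopology X d)"
    and cont: "continuous_map (Metric_space.mtopology X d) (Metric_space.mtopology X d) (T n)"
    and "x \<in> X \<Longrightarrow> T (m + n) x = T m (T n x)"
    using assms by (simp_all add: Zk_action_def)
  show "x \<in> X \<Longrightarrow> T n x \<in> X"
    using cont Metric_space.topspace_mtopology[OF ms] by (auto simp: continuous_map_def)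
  show "x \<in> X \<Longrightarrow> T (- n) (T n x) = x"
    using assms by (metis Zk_action_def add.left_inverse)
qed

subsection \<open>Uniform continuity and comparison of metrics\<close>

lemma (in Metric_space) continuous_map_uniform_delta:
  assumes "compact_space mtopology" and "continuous_map mtopology mtopology f" and "e > 0"
  shows "\<exists>\<delta>>0. \<forall>x\<in>M. \<forall>y\<in>M. d x y < \<delta> \<longrightarrow> d (f x) (f y) < e"
proof -
  have "uniformly_continuous_map (metric (M, d)) (metric (M, d)) f"
    by (rule continuous_imp_uniformly_continuous_map) (simp add: assms)
  then show ?thesis
    using \<open>e > 0\<close> unfolding uniformly_continuous_map_def by (metis commute mdist_metric mspace_metric)
qed

lemma finite_common_delta:
  fixes d :: "'a \<Rightarrow> 'a \<Rightarrow> real"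
  assumes "finite I" and "\<And>i. i \<in> I \<Longrightarrow> \<exists>\<delta>>0. \<forall>x\<in>X. \<forall>y\<in>X. d x y < \<delta> \<longrightarrow> P i x y"
  shows "\<exists>\<delta>>0. \<forall>i\<in>I. \<forall>x\<in>X. \<forall>y\<in>X. d x y < \<delta> \<longrightarrow> P i x y"
  using assms
proof (induction I rule: finite_induct)
  case empty
  show ?case by (auto intro: exI[of _ 1])
next
  case (insert a F)
  then obtain \<delta>1 where "\<delta>1 > 0" "\<forall>i\<in>F. \<forall>x\<in>X. \<forall>y\<in>X. d x y < \<delta>1 \<longrightarrow> P i x y"
    by auto
  moreover obtain \<delta>2 where "\<delta>2 > 0" "\<forall>x\<in>X. \<forall>y\<in>X. d x y < \<delta>2 \<longrightarrow> P a x y"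
    using insert.prems[of a] by blast
  ultimately show ?case by (intro exI[of _ "min \<delta>1 \<delta>2"]) auto
qed

lemma Zk_action_uniform_delta:
  assumes "Zk_action X d T" and "finite F" and "e > 0"
  obtains \<delta> where "\<delta> > 0"
    and "\<And>n x y. n \<in> F \<Longrightarrow> x \<in> X \<Longrightarrow> y \<in> X \<Longrightarrow> d x y < \<delta> \<Longrightarrow> d (T n x) (T n y) < e"
  using finite_common_delta[OF \<open>finite F\<close>, of X d "\<lambda>n x y. d (T n x) (T n y) < e"]
    Metric_space.continuous_map_uniform_delta[OF Zk_actionD(1-3)[OF assms(1)] \<open>e > 0\<close>]
  by blast

text \<open>A continuous bijection from a compact space onto a Hausdorff space is a homeomorphism.\<close>

lemma mtopology_eq_if_compact_coarser:
  assumes m1: "Metric_space M d1" and m2: "Metric_space M d2"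
    and cpt: "compact_space (Metric_space.mtopology M d1)"
    and cont: "\<And>x e. x \<in> M \<Longrightarrow> e > 0 \<Longrightarrow> \<exists>\<delta>>0. \<forall>y\<in>M. d1 x y < \<delta> \<longrightarrow> d2 x y < e"
  shows "Metric_space.mtopology M d2 = Metric_space.mtopology M d1"
proof -
  have "continuous_map (Metric_space.mtopology M d1) (Metric_space.mtopology M d2) id"
    using cont by (auto simp: Metric_space.metric_continuous_map[OF m1 m2]) (metis cont)
  moreover have "Hausdorff_space (Metric_space.mtopology M d2)"
    by (rule Metric_space.Hausdorff_space_mtopology[OF m2])
  ultimately have "homeomorphic_map (Metric_space.mtopology M d1) (Metric_space.mtopology M d2) id"
    using cpt by (intro bijective_closed_imp_homeomorphic_map continuous_imp_closed_map)
      (simp_all add: Metric_space.topspace_mtopology[OF m1] Metric_space.topspace_mtopology[OF m2])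
  then show ?thesis by simp
qed

subsection \<open>Dynamical metrics\<close>

lemma dyn_metric_less_iff:
  assumes "finite \<Omega>" and "\<Omega> \<noteq> {}"
  shows "dyn_metric d T \<Omega> x y < e \<longleftrightarrow> (\<forall>n\<in>\<Omega>. d (T n x) (T n y) < e)"
  using assms by (simp add: dyn_metric_def)

lemma dist_le_dyn_metric:
  assumes "finite \<Omega>" and "n \<in> \<Omega>"
  shows "d (T n x) (T n y) \<le> dyn_metric d T \<Omega> x y"
  using assms by (simp add: dyn_metric_def)

lemma Metric_space_dyn_metric:
  assumes za: "Zk_action X d T" and fin: "finite \<Omega>" and ne: "\<Omega> \<noteq> {}"
  shows "Metric_space X (dyn_metric d T \<Omega>)"
proof -
  note act = Zk_actionD[OF za]
  interpret Metric_space X d by (fact act(1))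
  obtain n0 where n0: "n0 \<in> \<Omega>" using ne by blast
  show ?thesis
  proof
    fix x y
    show "0 \<le> dyn_metric d T \<Omega> x y"
      using dist_le_dyn_metric[OF fin n0, of d T x y] nonneg order_trans by blast
    show "dyn_metric d T \<Omega> x y = dyn_metric d T \<Omega> y x"
      unfolding dyn_metric_def by (simp add: commute)
  next
    fix x y assume xy: "x \<in> X" "y \<in> X"
    show "dyn_metric d T \<Omega> x y = 0 \<longleftrightarrow> x = y"
    proof
      assume "dyn_metric d T \<Omega> x y = 0"
      then have "d (T n0 x) (T n0 y) \<le> 0" using dist_le_dyn_metric[OF fin n0, of d T x y] by simp
      then have "T n0 x = T n0 y" using act(4) xy nonneg by (meson order.antisym zero)
      then show "x = y" using act(6) xy by metis
    next
      assume "x = y"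
      then have "(\<lambda>n. d (T n x) (T n y)) ` \<Omega> = {0}" using ne act(4) xy by auto
      then show "dyn_metric d T \<Omega> x y = 0" by (simp add: dyn_metric_def)
    qed
  next
    fix x y z assume xyz: "x \<in> X" "y \<in> X" "z \<in> X"
    have "d (T n x) (T n z) \<le> dyn_metric d T \<Omega> x y + dyn_metric d T \<Omega> y z" if "n \<in> \<Omega>" for n
      using triangle[OF act(4)[OF xyz(1)] act(4)[OF xyz(2)] act(4)[OF xyz(3)], of n n n]
        dist_le_dyn_metric[OF fin that, of d T x y] dist_le_dyn_metric[OF fin that, of d T y z]
      by linarith
    then show "dyn_metric d T \<Omega> x z \<le> dyn_metric d T \<Omega> x y + dyn_metric d T \<Omega> y z"
      using fin ne by (simp add: dyn_metric_def)
  qed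
qed

lemma mtopology_dyn_metric:
  assumes za: "Zk_action X d T" and fin: "finite \<Omega>" and ne: "\<Omega> \<noteq> {}"
  shows "Metric_space.mtopology X (dyn_metric d T \<Omega>) = Metric_space.mtopology X d"
proof (rule mtopology_eq_if_compact_coarser[OF Zk_actionD(1)[OF za] Metric_space_dyn_metric[OF assms]
      Zk_actionD(2)[OF za]])
  fix x and e :: real assume "x \<in> X" "e > 0"
  then obtain \<delta> where "\<delta> > 0"
    and "\<And>n y. n \<in> \<Omega> \<Longrightarrow> y \<in> X \<Longrightarrow> d x y < \<delta> \<Longrightarrow> d (T n x) (T n y) < e"
    using Zk_action_uniform_delta[OF za fin] by metis
  then show "\<exists>\<delta>>0. \<forall>y\<in>X. d x y < \<delta> \<longrightarrow> dyn_metric d T \<Omega> x y < e"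
    by (auto simp: dyn_metric_less_iff[OF fin ne])
qed

lemma Widim_le_Widim:
  assumes "Metric_space.mtopology X m1 = Metric_space.mtopology X m2"
    and "\<And>x y. x \<in> X \<Longrightarrow> y \<in> X \<Longrightarrow> m2 x y < \<delta> \<Longrightarrow> m1 x y < \<epsilon>"
  shows "Widim \<epsilon> X m1 \<le> Widim \<delta> X m2"
  unfolding Widim_def eps_embedding_def using assms by (intro INF_superset_mono) fastforce+

lemma Widim_antimono: "\<epsilon> \<le> \<epsilon>' \<Longrightarrow> Widim \<epsilon>' X m \<le> Widim \<epsilon> X m"
  by (rule Widim_le_Widim) auto

lemma Widim_dyn_metric_translate_le:
  assumes za: "Zk_action X d T" and "finite F" and "e > 0"
  obtains \<delta> where "\<delta> > 0"
    and "\<And>\<Omega> \<Omega>'. finite \<Omega> \<Longrightarrow> \<Omega> \<noteq> {} \<Longrightarrow> finite \<Omega>' \<Longrightarrow> \<Omega>' \<noteq> {} \<Longrightarrow>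
           (\<And>u. u \<in> \<Omega>' \<Longrightarrow> \<exists>f\<in>F. \<exists>v\<in>\<Omega>. u = f + v) \<Longrightarrow>
           Widim e X (dyn_metric d T \<Omega>') \<le> Widim \<delta> X (dyn_metric d T \<Omega>)"
proof -
  note act = Zk_actionD[OF za]
  obtain \<delta> where \<delta>: "\<delta> > 0"
    and unif: "\<And>n x y. n \<in> F \<Longrightarrow> x \<in> X \<Longrightarrow> y \<in> X \<Longrightarrow> d x y < \<delta> \<Longrightarrow> d (T n x) (T n y) < e"
    using Zk_action_uniform_delta[OF assms] by blast
  have "Widim e X (dyn_metric d T \<Omega>') \<le> Widim \<delta> X (dyn_metric d T \<Omega>)"
    if fin: "finite \<Omega>" "\<Omega> \<noteq> {}" and fin': "finite \<Omega>'" "\<Omega>' \<noteq> {}"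
      and cover: "\<And>u. u \<in> \<Omega>' \<Longrightarrow> \<exists>f\<in>F. \<exists>v\<in>\<Omega>. u = f + v" for \<Omega> \<Omega>'
  proof (rule Widim_le_Widim)
    show "Metric_space.mtopology X (dyn_metric d T \<Omega>') = Metric_space.mtopology X (dyn_metric d T \<Omega>)"
      using mtopology_dyn_metric[OF za fin] mtopology_dyn_metric[OF za fin'] by simp
  next
    fix x y assume xy: "x \<in> X" "y \<in> X" and "dyn_metric d T \<Omega> x y < \<delta>"
    then have close: "d (T v x) (T v y) < \<delta>" if "v \<in> \<Omega>" for v
      using that by (simp add: dyn_metric_less_iff[OF fin])
    have "d (T u x) (T u y) < e" if u: "u \<in> \<Omega>'" for u
    proof -
      obtain f v where "f \<in> F" "v \<in> \<Omega>" "u = f + v" using cover[OF u] by blast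
      then show ?thesis using unif[OF \<open>f \<in> F\<close> act(4) act(4) close] xy act(5) by simp
    qed
    then show "dyn_metric d T \<Omega>' x y < e" by (simp add: dyn_metric_less_iff[OF fin'])
  qed
  with \<delta> that show ?thesis by blast
qed

subsection \<open>Lattice neighbourhoods of a subspace\<close>

lemma finite_int_cube: "finite (int_cube N :: (int^'k) set)"
proof -
  have "int_cube N \<subseteq> vec_lambda ` PiE (UNIV :: 'k set) (\<lambda>_. {- int N..int N})"
  proof
    fix u :: "int^'k" assume "u \<in> int_cube N"
    then have "(\<lambda>i. u $ i) \<in> PiE UNIV (\<lambda>_. {- int N..int N})"
      by (force simp: int_cube_def abs_le_iff)
    then show "u \<in> vec_lambda ` PiE UNIV (\<lambda>_. {- int N..int N})"
      by (metis image_eqI vec_lambda_eta)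
  qed
  moreover have "finite (PiE (UNIV :: 'k set) (\<lambda>_. {- int N..int N}))"
    by (intro finite_PiE) auto
  ultimately show ?thesis using finite_subset by blast
qed

lemma zero_in_nbhd_lattice_int_cube:
  assumes "subspace V" and "r > 0"
  shows "(0 :: int^'k) \<in> nbhd_lattice r (V :: (real^'k) set) \<inter> int_cube N"
proof -
  have "vec_of_int (0 :: int^'k) = 0" by (simp add: vec_of_int_def vec_eq_iff)
  then show ?thesis using assms subspace_0[OF assms(1)]
    by (auto simp: nbhd_lattice_def int_cube_def intro!: bexI[of _ 0])
qed

lemma vec_of_int_diff: "vec_of_int (u - v) = vec_of_int u - vec_of_int v"
  by (simp add: vec_of_int_def vec_eq_iff)

lemma norm_vec_of_int_round_diff_le:
  fixes w :: "real^'k"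
  shows "norm (vec_of_int (\<chi> i. round (w $ i)) - w) \<le> sqrt (real CARD('k)) / 2"
proof -
  let ?z = "vec_of_int (\<chi> i. round (w $ i)) - w"
  have "(?z $ i)\<^sup>2 \<le> 1/4" for i
  proof -
    have "\<bar>?z $ i\<bar> \<le> 1/2"
      using of_int_round_abs_le[of "w $ i"] by (simp add: vec_of_int_def)
    then have "\<bar>?z $ i\<bar>\<^sup>2 \<le> (1/2)\<^sup>2" by (intro power_mono) auto
    then show ?thesis by (simp add: power2_eq_square)
  qed
  then have "norm ?z \<le> sqrt (\<Sum>i\<in>(UNIV :: 'k set). 1/4)"
    unfolding norm_vec_def L2_set_def by (intro real_sqrt_le_mono sum_mono) simp
  also have "\<dots> = sqrt (real CARD('k)) / 2"
    by (simp add: real_sqrt_divide)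
  finally show ?thesis .
qed

lemma nbhd_lattice_int_cube_decompose:
  fixes V :: "(real^'k) set"
  assumes r: "r > sqrt (real CARD('k)) / 2"
    and u: "u \<in> nbhd_lattice r' V \<inter> int_cube N"
  shows "\<exists>f\<in>int_cube (nat \<lceil>r + r'\<rceil>). \<exists>v\<in>nbhd_lattice r V \<inter> int_cube (N + nat \<lceil>r + r'\<rceil>).
           u = f + v"
proof -
  let ?c = "nat \<lceil>r + r'\<rceil>"
  obtain w where w: "w \<in> V" "norm (vec_of_int u - w) < r'"
    using u by (auto simp: nbhd_lattice_def)
  define v :: "int^'k" where "v = (\<chi> i. round (w $ i))"
  define f where "f = u - v"
  have v_near: "norm (vec_of_int v - w) < r"
    using norm_vec_of_int_round_diff_le[of w] r by (simp add: v_def)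
  have "norm (vec_of_int f) = norm ((vec_of_int u - w) - (vec_of_int v - w))"
    by (simp add: f_def vec_of_int_diff)
  also have "\<dots> \<le> norm (vec_of_int u - w) + norm (vec_of_int v - w)"
    by (rule norm_triangle_ineq4)
  also have "\<dots> < r + r'" using w v_near by simp
  finally have f_small: "norm (vec_of_int f) < r + r'" .
  have f_bound: "\<bar>f $ i\<bar> \<le> int ?c" for i
  proof -
    have "real_of_int \<bar>f $ i\<bar> \<le> norm (vec_of_int f)"
      using component_le_norm_cart[of "vec_of_int f" i] by (simp add: vec_of_int_def)
    then show ?thesis using f_small by linarith
  qed
  have "\<bar>v $ i\<bar> \<le> int (N + ?c)" for i
  proof -
    have "v $ i = u $ i - f $ i" by (simp add: f_def)
    moreover have "\<bar>u $ i\<bar> \<le> int N" using u by (simp add: int_cube_def)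
    ultimately show ?thesis using f_bound[of i] by simp
  qed
  then have "v \<in> nbhd_lattice r V \<inter> int_cube (N + ?c)"
    using v_near w(1) by (auto simp: nbhd_lattice_def int_cube_def)
  moreover have "f \<in> int_cube ?c" using f_bound by (simp add: int_cube_def)
  ultimately show ?thesis unfolding f_def by force
qed

subsection \<open>Volume of \<open>V \<inter> [-N,N]\<^sup>k\<close>\<close>

lemma subspace_vol_eq_measure_preimage:
  fixes V :: "(real^'k) set"
  assumes "subspace V" and "dim V = CARD('h::finite)"
  obtains L :: "real^'h \<Rightarrow> real^'k"
  where "linear L" and "\<And>y. norm (L y) = norm y" and "range L = V"
    and "\<And>S. subspace_vol TYPE('h) V S = measure lborel (L -` S)"
proof -
  define P where "P = (\<lambda>L :: real^'h \<Rightarrow> real^'k. linear L \<and> (\<forall>y. norm (L y) = norm y) \<and> range L = V)"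
  obtain f :: "real^'h \<Rightarrow> real^'k" where "linear f" "f ` UNIV = V" "\<And>x. norm (f x) = norm x"
  proof (rule isometry_subspaces[OF subspace_UNIV assms(1)])
    show "dim (UNIV :: (real^'h) set) = dim V" using assms(2) by simp
  qed blast
  then have "P (SOME L. P L)" by (intro someI[of P f]) (simp add: P_def)
  then show ?thesis using that by (auto simp: P_def subspace_vol_def)
qed

lemma emeasure_lborel_eq_scaleR_preimage:
  fixes A :: "'a::euclidean_space set"
  assumes "c \<noteq> 0" and "A \<in> sets borel"
  shows "emeasure lborel A = ennreal (\<bar>c\<bar> ^ DIM('a)) * emeasure lborel ((\<lambda>x. c *\<^sub>R x) -` A)"
proof -
  have "emeasure lborel A
      = emeasure (density (distr lborel borel (\<lambda>x::'a. 0 + c *\<^sub>R x)) (\<lambda>_. \<bar>c\<bar> ^ DIM('a))) A"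
    by (subst lborel_affine[OF assms(1), of 0]) simp
  also have "\<dots> = ennreal (\<bar>c\<bar> ^ DIM('a)) * emeasure lborel ((\<lambda>x. 0 + c *\<^sub>R x) -` A \<inter> space lborel)"
    using assms(2) by (simp add: emeasure_density_const emeasure_distr)
  finally show ?thesis by simp
qed

lemma subspace_vol_real_cube:
  fixes V :: "(real^'k) set"
  assumes "subspace V" and "dim V = CARD('h::finite)"
  obtains v1 where "v1 > 0"
    and "\<And>N. N \<ge> 1 \<Longrightarrow> subspace_vol TYPE('h) V (V \<inter> real_cube N) = v1 * real N ^ CARD('h)"
proof -
  obtain L :: "real^'h \<Rightarrow> real^'k" where lin: "linear L" and iso: "\<And>y. norm (L y) = norm y"
    and rng: "range L = V" and vol: "\<And>S. subspace_vol TYPE('h) V S = measure lborel (L -` S)"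
    using subspace_vol_eq_measure_preimage[OF assms] by blast
  have cont: "continuous_on UNIV L"
    using lin by (simp add: linear_continuous_on linear_conv_bounded_linear)
  have meas: "L -` real_cube N \<in> sets borel" for N
  proof -
    have "closed {y. \<forall>i. \<bar>(L y) $ i\<bar> \<le> real N}"
      by (intro closed_Collect_all closed_Collect_le continuous_intros
          continuous_on_compose2[OF cont]) auto
    then show ?thesis by (simp add: real_cube_def borel_closed)
  qed
  define A where "A = L -` real_cube 1"
  have scale: "emeasure lborel (L -` real_cube N) = ennreal (real N ^ CARD('h)) * emeasure lborel A"
    if "N \<ge> 1" for N
  proof -
    have "(\<lambda>x. real N *\<^sub>R x) -` (L -` real_cube N) = A"
      using that by (auto simp: A_def real_cube_def linear_cmul[OF lin] abs_mult)
    then show ?thesis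
      using emeasure_lborel_eq_scaleR_preimage[of "real N" "L -` real_cube N"] meas that by simp
  qed
  have "ball 0 1 \<subseteq> A"
  proof
    fix y :: "real^'h" assume "y \<in> ball 0 1"
    then have "\<bar>(L y) $ i\<bar> \<le> 1" for i
      using component_le_norm_cart[of "L y" i] iso[of y] by simp
    then show "y \<in> A" by (simp add: A_def real_cube_def)
  qed
  moreover have "emeasure lborel (ball (0 :: real^'h) 1) > 0" by (simp add: emeasure_ball)
  ultimately have pos: "emeasure lborel A > 0"
    using emeasure_mono[of "ball 0 1" A lborel] meas[of 1] unfolding A_def by simp
  have "A \<subseteq> cball 0 (real CARD('k))"
  proof
    fix y :: "real^'h" assume "y \<in> A"
    then have "(\<Sum>i\<in>UNIV. \<bar>(L y) $ i\<bar>) \<le> (\<Sum>i\<in>(UNIV :: 'k set). 1)"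
      by (intro sum_mono) (simp add: A_def real_cube_def)
    then show "y \<in> cball 0 (real CARD('k))"
      using norm_le_l1_cart[of "L y"] iso[of y] by simp
  qed
  then have fin: "emeasure lborel A < \<infinity>"
    by (rule order_le_less_trans[OF emeasure_mono emeasure_lborel_cball_finite]) simp
  show ?thesis
  proof
    show "enn2real (emeasure lborel A) > 0" using fin pos by (simp add: enn2real_positive_iff)
  next
    fix N :: nat assume "N \<ge> 1"
    have "L -` (V \<inter> real_cube N) = L -` real_cube N" using rng by auto
    then show "subspace_vol TYPE('h) V (V \<inter> real_cube N) = enn2real (emeasure lborel A) * real N ^ CARD('h)"
      by (simp add: vol measure_def scale[OF \<open>N \<ge> 1\<close>] enn2real_mult mult.commute)
  qed
qed

lemma tendsto_shifted_power_ratio: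
  assumes "\<And>N. N \<ge> 1 \<Longrightarrow> v N = v1 * real N ^ h" and "v1 > 0"
  shows "(\<lambda>N. v (N + c) / v N) \<longlonglongrightarrow> 1"
proof -
  have "(\<lambda>N. (1 + real c / real N) ^ h) \<longlonglongrightarrow> (1 + 0) ^ h"
    by (intro tendsto_intros)
  moreover have "\<forall>\<^sub>F N in sequentially. (1 + real c / real N) ^ h = v (N + c) / v N"
  proof (rule eventually_sequentiallyI[of 1])
    fix N :: nat assume N: "N \<ge> 1"
    have "v (N + c) / v N = (real (N + c) / real N) ^ h"
      using assms N by (simp add: power_divide)
    also have "real (N + c) / real N = 1 + real c / real N"
      using N by (simp add: field_simps)
    finally show "(1 + real c / real N) ^ h = v (N + c) / v N" by simp
  qed
  ultimately show ?thesis by (simp add: Lim_transform_eventually)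
qed

lemma ereal_div_rescale:
  fixes x :: ereal
  assumes "x \<ge> 0" and "p > 0" and "q > 0"
  shows "x / ereal q = ereal (p / q) * (x / ereal p)"
  using assms by (cases x) (auto simp: field_simps)

lemma liminf_div_le_shift:
  fixes a b :: "nat \<Rightarrow> ereal" and v :: "nat \<Rightarrow> real"
  assumes le: "\<forall>\<^sub>F N in sequentially. a N \<le> b (N + c)"
    and pos: "\<forall>\<^sub>F N in sequentially. v N > 0"
    and nonneg: "\<And>N. b N \<ge> 0"
    and ratio: "(\<lambda>N. v (N + c) / v N) \<longlonglongrightarrow> 1"
  shows "liminf (\<lambda>N. a N / ereal (v N)) \<le> liminf (\<lambda>N. b N / ereal (v N))"
proof -
  have pos': "\<forall>\<^sub>F N in sequentially. v (N + c) > 0"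
    using pos by (simp add: eventually_sequentially) (metis le_add1 order_trans)
  have "liminf (\<lambda>N. a N / ereal (v N))
      \<le> liminf (\<lambda>N. ereal (v (N + c) / v N) * (b (N + c) / ereal (v (N + c))))"
  proof (rule Liminf_mono)
    show "\<forall>\<^sub>F N in sequentially. a N / ereal (v N)
        \<le> ereal (v (N + c) / v N) * (b (N + c) / ereal (v (N + c)))"
      using le pos pos'
    proof eventually_elim
      case (elim N)
      then have "a N / ereal (v N) \<le> b (N + c) / ereal (v N)"
        by (simp add: ereal_divide_right_mono)
      also have "\<dots> = ereal (v (N + c) / v N) * (b (N + c) / ereal (v (N + c)))"
        using elim nonneg by (intro ereal_div_rescale) auto
      finally show ?case .
    qed
  qed
  also have "\<dots> = liminf (\<lambda>N. b (N + c) / ereal (v (N + c)))"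
    using ereal_liminf_lim_mult[of "\<lambda>N. ereal (v (N + c) / v N)" 1] ratio
    by (simp add: one_ereal_def tendsto_ereal)
  also have "\<dots> = liminf (\<lambda>N. b N / ereal (v N))"
    using liminf_shift_k[of "\<lambda>N. b N / ereal (v N)" c] by simp
  finally show ?thesis .
qed

subsection \<open>The mean dimension quantity\<close>

lemma mdim_quantity_antimono:
  fixes V :: "(real^'k) set"
  assumes "subspace V" and "dim V = CARD('h::finite)" and "e \<le> e'"
  shows "mdim_quantity TYPE('h) X d T V r e' \<le> mdim_quantity TYPE('h) X d T V r e"
proof -
  obtain v1 where "v1 > 0"
    and "\<And>N. N \<ge> 1 \<Longrightarrow> subspace_vol TYPE('h) V (V \<inter> real_cube N) = v1 * real N ^ CARD('h)"
    using subspace_vol_real_cube[OF assms(1,2)] by blast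
  then have "\<forall>\<^sub>F N in sequentially. subspace_vol TYPE('h) V (V \<inter> real_cube N) > 0"
    by (auto simp: eventually_sequentially intro!: exI[of _ 1])
  then show ?thesis
    unfolding mdim_quantity_def
    by (intro Liminf_mono, elim eventually_mono)
      (auto intro!: ereal_divide_right_mono Widim_antimono \<open>e \<le> e'\<close>)
qed

lemma mdim_quantity_le_shift_radius:
  fixes V :: "(real^'k) set"
  assumes za: "Zk_action X d T" and sV: "subspace V" and dV: "dim V = CARD('h::finite)"
    and r: "r > sqrt (real CARD('k)) / 2" and r': "r' > 0" and e: "e > 0"
  obtains \<delta> where "\<delta> > 0"
    and "mdim_quantity TYPE('h) X d T V r' e \<le> mdim_quantity TYPE('h) X d T V r \<delta>"
proof -
  define c where "c = nat \<lceil>r + r'\<rceil>"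
  have "r > 0" by (rule order_le_less_trans[OF _ r]) simp
  have lattice_finite_nonempty:
      "finite (nbhd_lattice \<rho> V \<inter> int_cube N)" "nbhd_lattice \<rho> V \<inter> int_cube N \<noteq> {}"
    if "\<rho> > 0" for \<rho> N
    using zero_in_nbhd_lattice_int_cube[OF sV that] finite_int_cube by auto
  obtain \<delta> where "\<delta> > 0"
    and widim: "\<And>\<Omega> \<Omega>'. finite \<Omega> \<Longrightarrow> \<Omega> \<noteq> {} \<Longrightarrow> finite \<Omega>' \<Longrightarrow> \<Omega>' \<noteq> {} \<Longrightarrow>
      (\<And>u. u \<in> \<Omega>' \<Longrightarrow> \<exists>f\<in>int_cube c. \<exists>v\<in>\<Omega>. u = f + v) \<Longrightarrow>
      Widim e X (dyn_metric d T \<Omega>') \<le> Widim \<delta> X (dyn_metric d T \<Omega>)"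
    using Widim_dyn_metric_translate_le[OF za finite_int_cube e] by blast
  have "Widim e X (dyn_metric d T (nbhd_lattice r' V \<inter> int_cube N))
      \<le> Widim \<delta> X (dyn_metric d T (nbhd_lattice r V \<inter> int_cube (N + c)))" for N
    using nbhd_lattice_int_cube_decompose[OF r]
    by (intro widim lattice_finite_nonempty \<open>r > 0\<close> r') (simp add: c_def)
  moreover obtain v1 where "v1 > 0"
    and vol: "\<And>N. N \<ge> 1 \<Longrightarrow> subspace_vol TYPE('h) V (V \<inter> real_cube N) = v1 * real N ^ CARD('h)"
    using subspace_vol_real_cube[OF sV dV] by blast
  moreover have "\<forall>\<^sub>F N in sequentially. subspace_vol TYPE('h) V (V \<inter> real_cube N) > 0"
    using vol \<open>v1 > 0\<close> by (auto simp: eventually_sequentially intro!: exI[of _ 1])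
  ultimately have "mdim_quantity TYPE('h) X d T V r' e \<le> mdim_quantity TYPE('h) X d T V r \<delta>"
    unfolding mdim_quantity_def
    by (intro liminf_div_le_shift[where c = c] tendsto_shifted_power_ratio[OF vol]) auto
  with \<open>\<delta> > 0\<close> that show ?thesis by blast
qed

lemma antimono_tendsto_SUP_at_right_0:
  fixes q :: "real \<Rightarrow> ereal"
  assumes mono: "\<And>a b. 0 < a \<Longrightarrow> a \<le> b \<Longrightarrow> q b \<le> q a"
  shows "(q \<longlongrightarrow> (SUP e\<in>{0<..}. q e)) (at_right 0)"
proof (rule order_tendstoI)
  fix a assume "a < (SUP e\<in>{0<..}. q e)"
  then obtain e where e: "e > 0" "a < q e" by (auto simp: less_SUP_iff)
  have "\<forall>\<^sub>F y in at_right 0. 0 < y \<and> y < e"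
    using e(1) by (auto simp: eventually_at_right_field intro!: exI[of _ e])
  then show "\<forall>\<^sub>F y in at_right 0. a < q y"
    by eventually_elim (use e mono in \<open>fastforce intro: order_less_le_trans\<close>)
next
  fix a assume "(SUP e\<in>{0<..}. q e) < a"
  then have "q y < a" if "y > 0" for y
    using order_le_less_trans[OF SUP_upper[of y "{0<..}" q]] that by simp
  then show "\<forall>\<^sub>F y in at_right 0. q y < a"
    using eventually_at_right_less[of "0::real"] by (auto elim: eventually_mono)
qed

theorem proposition3p1:
  fixes X :: "'a set" and d :: "'a \<Rightarrow> 'a \<Rightarrow> real" and T :: "int^'k \<Rightarrow> 'a \<Rightarrow> 'a"
    and V :: "(real^'k) set" and r1 r2 :: real
  assumes "Zk_action X d T"
    and "subspace V" and "dim V = CARD('h::finite)"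
    and "r1 > sqrt (real CARD('k)) / 2" and "r2 > sqrt (real CARD('k)) / 2"
  shows "\<exists>L. ((mdim_quantity TYPE('h) X d T V r1) \<longlongrightarrow> L) (at_right 0) \<and>
             ((mdim_quantity TYPE('h) X d T V r2) \<longlongrightarrow> L) (at_right 0)"
proof -
  define S where "S = (\<lambda>r. SUP e\<in>{0<..}. mdim_quantity TYPE('h) X d T V r e)"
  have lim: "(mdim_quantity TYPE('h) X d T V r \<longlongrightarrow> S r) (at_right 0)" for r
    unfolding S_def using mdim_quantity_antimono[OF assms(2,3)]
    by (intro antimono_tendsto_SUP_at_right_0)
  have le: "S r' \<le> S r"
    if r: "r > sqrt (real CARD('k)) / 2" and r': "r' > sqrt (real CARD('k)) / 2" for r r'
    unfolding S_def
  proof (rule SUP_least)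
    fix e :: real assume "e \<in> {0<..}"
    moreover have "r' > 0" by (rule order_le_less_trans[OF _ r']) simp
    ultimately obtain \<delta> where "\<delta> > 0"
      and "mdim_quantity TYPE('h) X d T V r' e \<le> mdim_quantity TYPE('h) X d T V r \<delta>"
      using mdim_quantity_le_shift_radius[OF assms(1-3) r] by auto
    then show "mdim_quantity TYPE('h) X d T V r' e \<le> (SUP e\<in>{0<..}. mdim_quantity TYPE('h) X d T V r e)"
      by (meson SUP_upper greaterThan_iff order_trans)
  qed
  have "S r1 = S r2" using le[OF assms(4,5)] le[OF assms(5,4)] by simp
  then show ?thesis using lim[of r1] lim[of r2] by auto
qed

end
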